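(* For every integers $d \geq 2$ and $s,t \geq 1$, we have $$\tfrac{s}{s+t}\mathsf U_{d,s}+\tfrac{t}{s+t}\mathsf U_{d,t}\subseteq \mathsf U_{d,s+t},$$ i.e. for all $B\in\mathsf U_{d,s}$, $C\in\mathsf U_{d,t}$, the matrix $\tfrac{s}{s+t}B+\tfrac{t}{s+t}C$ belongs to $\mathsf U_{d,s+t}$.
   Context: For integers $d\ge 2$, $s\ge 1$, a matrix $U\in\mathcal U(ds)$ (unitary $ds\times ds$ complex matrices) is viewed as a $d\times d$ block matrix with blocks $U_{ij}\in M_s(\mathbb C)$. Define $\phi_{d,s}(U)=\big(\tfrac1s\|U_{ij}\|_F^2\big)_{i,j=1}^d$, where $\|X\|_F=\operatorname{Tr}(XX^* )^{1/2}$, and $\mathsf U_{d,s}:=\phi_{d,s}(\mathcal U(ds))$. *)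

theory Defs
  imports "HOL-Analysis.Analysis"
begin

text \<open>Square complex matrices of size n are represented as functions
  nat => nat => complex, with indices 0..n-1 meaningful (entries outside are irrelevant).\<close>

definition unitary_mat :: "nat \<Rightarrow> (nat \<Rightarrow> nat \<Rightarrow> complex) \<Rightarrow> bool" where
  "unitary_mat n U \<longleftrightarrow>
     (\<forall>i<n. \<forall>j<n. (\<Sum>k<n. U i k * cnj (U j k)) = (if i = j then 1 else 0)) \<and>
     (\<forall>i<n. \<forall>j<n. (\<Sum>k<n. cnj (U k i) * U k j) = (if i = j then 1 else 0))"

definition phi :: "nat \<Rightarrow> nat \<Rightarrow> (nat \<Rightarrow> nat \<Rightarrow> complex) \<Rightarrow> (nat \<Rightarrow> nat \<Rightarrow> real)" where
  "phi d s U = (\<lambda>i j. if i < d \<and> j < d then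
      (1 / real s) * (\<Sum>a<s. \<Sum>b<s. (cmod (U (i * s + a) (j * s + b)))\<^sup>2) else 0)"

definition Uset :: "nat \<Rightarrow> nat \<Rightarrow> (nat \<Rightarrow> nat \<Rightarrow> real) set" where
  "Uset d s = phi d s ` {U. unitary_mat (d * s) U}"

end

theory Submission
  imports Defs
begin

(* Interleave the blocks of U \<in> U(ds) and V \<in> U(dt): the (i,j) block of size s + t of the
   new matrix W is diag(U_ij, V_ij). W arises from the block diagonal matrix U \<oplus> V by one
   permutation applied to rows and columns alike, so it is unitary, and
   ||W_ij||^2 = ||U_ij||^2 + ||V_ij||^2. Normalising by s + t turns this into
   phi(W) = s/(s+t) phi(U) + t/(s+t) phi(V). *)

lemma sum_lessThan_add:
  "(\<Sum>k<m + n. f k) = (\<Sum>k<m. f k) + (\<Sum>k<n. f (m + k :: nat))"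
  by (induction n) (simp_all add: add.assoc)

lemma block_index_less:
  fixes i a d m :: nat
  assumes "i < d" and "a < m"
  shows "i * m + a < d * m"
proof -
  have "i * m + a < (i + 1) * m" using assms(2) by simp
  also have "\<dots> \<le> d * m" using assms(1) by (intro mult_right_mono) simp_all
  finally show ?thesis .
qed

lemma block_index_decompose:
  fixes p d m :: nat
  assumes "p < d * m"
  obtains i a where "i < d" and "a < m" and "p = i * m + a"
proof
  show "p div m < d" using assms by (simp add: less_mult_imp_div_less)
  show "p mod m < m" using assms by (cases "m = 0") simp_all
  show "p = p div m * m + p mod m" by simp
qed

definition diag_block_mat ::
    "nat \<Rightarrow> (nat \<Rightarrow> nat \<Rightarrow> 'a::zero) \<Rightarrow> (nat \<Rightarrow> nat \<Rightarrow> 'a) \<Rightarrow> nat \<Rightarrow> nat \<Rightarrow> 'a" where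
  "diag_block_mat m U V = (\<lambda>p q. if p < m \<and> q < m then U p q
     else if m \<le> p \<and> m \<le> q then V (p - m) (q - m) else 0)"

lemma unitary_mat_diag_block:
  assumes U: "unitary_mat m U" and V: "unitary_mat n V"
  shows "unitary_mat (m + n) (diag_block_mat m U V)"
proof -
  let ?D = "diag_block_mat m U V"
  have "(\<Sum>k<m + n. ?D i k * cnj (?D j k)) = (if i = j then 1 else 0) \<and>
        (\<Sum>k<m + n. cnj (?D k i) * ?D k j) = (if i = j then 1 else 0)"
    if "i < m + n" "j < m + n" for i j
  proof (cases "i < m"; cases "j < m")
    assume "i < m" "j < m"
    then show ?thesis
      using U unfolding unitary_mat_def sum_lessThan_add diag_block_mat_def by simp
  next
    assume "\<not> i < m" "\<not> j < m"
    moreover have "i - m < n" "j - m < n" "i - m = j - m \<longleftrightarrow> i = j"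
      using that calculation by linarith+
    ultimately show ?thesis
      using V unfolding unitary_mat_def sum_lessThan_add diag_block_mat_def by simp
  qed (auto simp: sum_lessThan_add diag_block_mat_def)
  then show ?thesis unfolding unitary_mat_def by blast
qed

lemma unitary_mat_reindex:
  assumes \<sigma>: "bij_betw \<sigma> {..<n} {..<n}" and U: "unitary_mat n U"
  shows "unitary_mat n (\<lambda>i j. U (\<sigma> i) (\<sigma> j))"
proof -
  have "(\<Sum>k<n. U (\<sigma> i) (\<sigma> k) * cnj (U (\<sigma> j) (\<sigma> k))) = (if i = j then 1 else 0) \<and>
        (\<Sum>k<n. cnj (U (\<sigma> k) (\<sigma> i)) * U (\<sigma> k) (\<sigma> j)) = (if i = j then 1 else 0)"
    if "i < n" "j < n" for i j
  proof -
    have "\<sigma> i < n" "\<sigma> j < n" using that \<sigma> by (auto dest: bij_betwE)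
    moreover have "\<sigma> i = \<sigma> j \<longleftrightarrow> i = j"
      using that \<sigma> by (auto simp: bij_betw_def dest: inj_onD)
    moreover have
      "(\<Sum>k<n. U (\<sigma> i) (\<sigma> k) * cnj (U (\<sigma> j) (\<sigma> k))) = (\<Sum>k<n. U (\<sigma> i) k * cnj (U (\<sigma> j) k))"
      "(\<Sum>k<n. cnj (U (\<sigma> k) (\<sigma> i)) * U (\<sigma> k) (\<sigma> j)) = (\<Sum>k<n. cnj (U k (\<sigma> i)) * U k (\<sigma> j))"
      by (rule sum.reindex_bij_betw[OF \<sigma>])+
    ultimately show ?thesis using U unfolding unitary_mat_def by simp
  qed
  then show ?thesis unfolding unitary_mat_def by blast
qed

definition interleave_index :: "nat \<Rightarrow> nat \<Rightarrow> nat \<Rightarrow> nat \<Rightarrow> nat" where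
  "interleave_index d s t p =
     (if p mod (s + t) < s then p div (s + t) * s + p mod (s + t)
      else d * s + p div (s + t) * t + (p mod (s + t) - s))"

lemma interleave_index_left:
  assumes "a < s"
  shows "interleave_index d s t (i * (s + t) + a) = i * s + a"
  using assms by (simp add: interleave_index_def)

lemma interleave_index_right:
  assumes "a < t"
  shows "interleave_index d s t (i * (s + t) + (s + a)) = d * s + i * t + a"
  using assms by (simp add: interleave_index_def)

lemma bij_betw_interleave_index:
  "bij_betw (interleave_index d s t) {..<d * (s + t)} {..<d * (s + t)}"
proof -
  let ?\<sigma> = "interleave_index d s t" and ?A = "{..<d * (s + t)}"
  have "?\<sigma> p \<in> ?A" if "p \<in> ?A" for p
  proof -
    obtain i a where i: "i < d" and a: "a < s + t" and p: "p = i * (s + t) + a"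
      using \<open>p \<in> ?A\<close> by (auto elim: block_index_decompose)
    show ?thesis
    proof (cases "a < s")
      case True
      then have "?\<sigma> p = i * s + a" using p by (simp add: interleave_index_left)
      moreover have "i * s + a < d * s" using i True by (rule block_index_less)
      ultimately show ?thesis by (simp add: distrib_left)
    next
      case False
      then have "i * t + (a - s) < d * t" using i a by (intro block_index_less) simp_all
      moreover have "?\<sigma> p = d * s + (i * t + (a - s))"
        using False a p interleave_index_right[of "a - s" t d s i] by simp
      ultimately show ?thesis by (simp add: distrib_left)
    qed
  qed
  moreover have "k \<in> ?\<sigma> ` ?A" if "k \<in> ?A" for k
  proof (cases "k < d * s")
    case True
    then obtain i a where i: "i < d" and a: "a < s" and k: "k = i * s + a"
      by (rule block_index_decompose)
    then have "k = ?\<sigma> (i * (s + t) + a)" by (simp add: interleave_index_left)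
    moreover have "i * (s + t) + a < d * (s + t)" using i a by (intro block_index_less) simp_all
    ultimately show ?thesis by blast
  next
    case False
    then have "k - d * s < d * t" using that by (simp add: distrib_left)
    then obtain i a where i: "i < d" and a: "a < t" and k: "k - d * s = i * t + a"
      by (rule block_index_decompose)
    then have "k = ?\<sigma> (i * (s + t) + (s + a))" using False by (simp add: interleave_index_right)
    moreover have "i * (s + t) + (s + a) < d * (s + t)" using i a by (intro block_index_less) simp_all
    ultimately show ?thesis by blast
  qed
  ultimately have "?\<sigma> ` ?A = ?A" by blast
  then show ?thesis
    by (simp add: bij_betw_def eq_card_imp_inj_on)
qed

definition interleave_mat ::
    "nat \<Rightarrow> nat \<Rightarrow> nat \<Rightarrow> (nat \<Rightarrow> nat \<Rightarrow> 'a::zero) \<Rightarrow> (nat \<Rightarrow> nat \<Rightarrow> 'a) \<Rightarrow> nat \<Rightarrow> nat \<Rightarrow> 'a" where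
  "interleave_mat d s t U V =
     (\<lambda>p q. diag_block_mat (d * s) U V (interleave_index d s t p) (interleave_index d s t q))"

lemma unitary_mat_interleave:
  assumes "unitary_mat (d * s) U" and "unitary_mat (d * t) V"
  shows "unitary_mat (d * (s + t)) (interleave_mat d s t U V)"
proof -
  have "unitary_mat (d * (s + t)) (diag_block_mat (d * s) U V)"
    using unitary_mat_diag_block[OF assms] by (simp add: distrib_left)
  then show ?thesis
    unfolding interleave_mat_def by (rule unitary_mat_reindex[OF bij_betw_interleave_index])
qed

definition block_sqnorm :: "nat \<Rightarrow> (nat \<Rightarrow> nat \<Rightarrow> complex) \<Rightarrow> nat \<Rightarrow> nat \<Rightarrow> real" where
  "block_sqnorm s U i j = (\<Sum>a<s. \<Sum>b<s. (cmod (U (i * s + a) (j * s + b)))\<^sup>2)"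

lemma phi_eq_block_sqnorm:
  "phi d s U i j = (if i < d \<and> j < d then block_sqnorm s U i j / real s else 0)"
  by (simp add: phi_def block_sqnorm_def)

lemma block_sqnorm_interleave_mat:
  assumes "i < d" and "j < d"
  shows "block_sqnorm (s + t) (interleave_mat d s t U V) i j
    = block_sqnorm s U i j + block_sqnorm t V i j"
proof -
  let ?W = "interleave_mat d s t U V"
  have lt: "i * s + a < d * s" "j * s + a < d * s" if "a < s" for a
    using assms that by (simp_all add: block_index_less)
  have "?W (i * (s + t) + a) (j * (s + t) + b) = U (i * s + a) (j * s + b)"
    if "a < s" "b < s" for a b
    using that lt by (simp add: interleave_mat_def diag_block_mat_def interleave_index_left)
  moreover have "?W (i * (s + t) + a) (j * (s + t) + (s + b)) = 0" if "a < s" "b < t" for a b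
    using that lt(1)[of a] by (simp add: interleave_mat_def diag_block_mat_def
        interleave_index_left interleave_index_right)
  moreover have "?W (i * (s + t) + (s + a)) (j * (s + t) + b) = 0" if "a < t" "b < s" for a b
    using that lt(2)[of b] by (simp add: interleave_mat_def diag_block_mat_def
        interleave_index_left interleave_index_right)
  moreover have "?W (i * (s + t) + (s + a)) (j * (s + t) + (s + b)) = V (i * t + a) (j * t + b)"
    if "a < t" "b < t" for a b
    using that by (simp add: interleave_mat_def diag_block_mat_def interleave_index_right)
  ultimately show ?thesis
    by (simp add: block_sqnorm_def sum_lessThan_add)
qed

theorem proposition2p6:
  fixes d s t :: nat and B C :: "nat \<Rightarrow> nat \<Rightarrow> real"
  assumes "d \<ge> 2" and "s \<ge> 1" and "t \<ge> 1"
    and "B \<in> Uset d s" and "C \<in> Uset d t"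
  shows "(\<lambda>i j. (real s / real (s+t)) * B i j + (real t / real (s+t)) * C i j) \<in> Uset d (s+t)"
proof -
  obtain U where U: "unitary_mat (d * s) U" and B: "B = phi d s U"
    using \<open>B \<in> Uset d s\<close> unfolding Uset_def by blast
  obtain V where V: "unitary_mat (d * t) V" and C: "C = phi d t V"
    using \<open>C \<in> Uset d t\<close> unfolding Uset_def by blast
  have "(\<lambda>i j. (real s / real (s+t)) * B i j + (real t / real (s+t)) * C i j)
      = phi d (s + t) (interleave_mat d s t U V)"
    using \<open>s \<ge> 1\<close> \<open>t \<ge> 1\<close>
    by (intro ext) (simp add: B C phi_eq_block_sqnorm block_sqnorm_interleave_mat add_divide_distrib)
  moreover have "unitary_mat (d * (s + t)) (interleave_mat d s t U V)"
    using U V by (rule unitary_mat_interleave)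
  ultimately show ?thesis unfolding Uset_def by blast
qed

end
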